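(* For $n\ge1$, \[R_n^{D,<}(x)=\sum_{k=1}^{\lceil (n+1)/2\rceil}\bar d_{n,k}\,x^k(1+x)^{n-k},\] where $\bar d_{n,k}=\#\{\pi\in\overline{\mathcal S}_n:\mathrm{leaf}(T_\pi)=k,\ |\mathrm{Negs}(\pi)|\text{ even}\}$. Consequently $R_n^{D}(x)=\sum_{k=1}^{\lceil (n+1)/2\rceil}(\widehat d_{n,k}+\bar d_{n,k})\,x^k(1+x)^{n-k}$, with $\widehat d_{n,k}=\#\{\pi\in\mathcal S_n:\mathrm{leaf}(T_\pi)=k,\ |\mathrm{Negs}(\pi)|\text{ even}\}$.
   Context: $\mathfrak B_n$ is the set of signed permutations $\pi=\pi_1\cdots\pi_n$ (words over $\{\pm1,\dots,\pm n\}$ with $|\pi_1|,\dots,|\pi_n|$ a permutation of $[n]$), compared as integers; set $\pi_0=0$. $\mathrm{Negs}(\pi)$ is the set of negative entries of $\pi$, and $\mathfrak D_n=\{\pi\in\mathfrak B_n:|\mathrm{Negs}(\pi)|\text{ even}\}$. $\mathrm{run}_B(\pi)$ is $1$ plus the number of $i\in\{1,\dots,n-1\}$ with $\pi_{i-1}<\pi_i>\pi_{i+1}$ or $\pi_{i-1}>\pi_i<\pi_{i+1}$; $R_n^{D}(x)=\sum_{\pi\in\mathfrak D_n}x^{\mathrm{run}_B(\pi)}$ and $R_n^{D,<}(x)$ is the same sum restricted to $\pi_1<0$. Snakes: $\mathcal S_n=\{\pi\in\mathfrak B_n:0<\pi_1>\pi_2<\pi_3>\cdots\}$, and $\overline{\mathcal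 S}_n=\{-\pi:\pi\in\mathcal S_n\}=\{\pi\in\mathfrak B_n:0>\pi_1<\pi_2>\pi_3<\cdots\}$, where $-\pi$ changes the sign of every entry. Trees are rooted binary trees with each child designated left or right. A min–max tree is labeled bijectively by a totally ordered set so that each node's label is the minimum or maximum of its subtree's labels. A node with a child is inner; an inner node is a min-node (resp. max-node) if its label is the minimum (resp. maximum) of its subtree. An HR-tree is a min–max tree in which every inner node $s$ has a nonempty right subtree containing the maximum label of the subtree of $s$ if $s$ is a min-node, the minimum if $s$ is a max-node. $T_\pi$ is the unique HR-tree with label set $\{0,\pi_1,\dots,\pi_n\}$ whose in-order reading word ($w(T)=w(L)\,\ell_{\mathrm{root}}\,w(R)$) is $0\pi_1\cdots\pi_n$; $\mathrm{leaf}(T)$ is its number of leaves. *)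

theory Defs
  imports Complex_Main
begin

definition signed_perms :: "nat \<Rightarrow> int list set" where
  "signed_perms n = {p. length p = n \<and> distinct (map abs p) \<and> set (map abs p) = {1..int n}}"

definition Negs :: "int list \<Rightarrow> int set" where
  "Negs p = {x \<in> set p. x < 0}"

definition typeD_perms :: "nat \<Rightarrow> int list set" where
  "typeD_perms n = {p \<in> signed_perms n. even (card (Negs p))}"

(* run_B, with pi_0 = 0: the word w = 0 # pi, so w ! i = pi_i *)
definition runB :: "int list \<Rightarrow> nat" where
  "runB p = (let w = 0 # p in
     1 + card {i \<in> {1..length p - 1}.
            (w ! (i - 1) < w ! i \<and> w ! i > w ! (i + 1)) \<or>
            (w ! (i - 1) > w ! i \<and> w ! i < w ! (i + 1))})"

definition RD :: "nat \<Rightarrow> real \<Rightarrow> real" where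
  "RD n x = (\<Sum>p\<in>typeD_perms n. x ^ runB p)"

definition RD_neg :: "nat \<Rightarrow> real \<Rightarrow> real" where
  "RD_neg n x = (\<Sum>p\<in>{p \<in> typeD_perms n. hd p < 0}. x ^ runB p)"

definition snakes :: "nat \<Rightarrow> int list set" where
  "snakes n = {p \<in> signed_perms n. \<forall>i<n. let w = 0 # p in
      (if even i then w ! i < w ! (i + 1) else w ! i > w ! (i + 1))}"

definition snakes_bar :: "nat \<Rightarrow> int list set" where
  "snakes_bar n = (map uminus) ` snakes n"

datatype 'a btree = Tip | Nd "'a btree" 'a "'a btree"

fun labels :: "'a btree \<Rightarrow> 'a set" where
  "labels Tip = {}"
| "labels (Nd l a r) = labels l \<union> {a} \<union> labels r"

fun inord :: "'a btree \<Rightarrow> 'a list" where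
  "inord Tip = []"
| "inord (Nd l a r) = inord l @ [a] @ inord r"

fun leaf :: "'a btree \<Rightarrow> nat" where
  "leaf Tip = 0"
| "leaf (Nd l a r) = (if l = Tip \<and> r = Tip then 1 else leaf l + leaf r)"

fun hr_cond :: "'a::linorder btree \<Rightarrow> bool" where
  "hr_cond Tip = True"
| "hr_cond (Nd l a r) =
    (let S = labels (Nd l a r) in
      hr_cond l \<and> hr_cond r \<and> (a = Min S \<or> a = Max S) \<and>
      ((l \<noteq> Tip \<or> r \<noteq> Tip) \<longrightarrow>
         r \<noteq> Tip \<and> (a = Min S \<longrightarrow> Max S \<in> labels r)
                    \<and> (a = Max S \<longrightarrow> Min S \<in> labels r)))"

definition HR_tree :: "'a::linorder btree \<Rightarrow> bool" where
  "HR_tree t \<longleftrightarrow> t \<noteq> Tip \<and> distinct (inord t) \<and> hr_cond t"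

definition T_of :: "int list \<Rightarrow> int btree" where
  "T_of p = (THE t. HR_tree t \<and> inord t = 0 # p)"

definition dbar :: "nat \<Rightarrow> nat \<Rightarrow> nat" where
  "dbar n k = card {p \<in> snakes_bar n. leaf (T_of p) = k \<and> even (card (Negs p))}"

definition dhat :: "nat \<Rightarrow> nat \<Rightarrow> nat" where
  "dhat n k = card {p \<in> snakes n. leaf (T_of p) = k \<and> even (card (Negs p))}"

end

theory Submission
  imports Defs "HOL-Combinatorics.Multiset_Permutations"
begin

(* The core identity compares, for a letter a and a finite set Y of further letters, two sums over
   the words a # u with u an arrangement of Y starting below a: the runs polynomial, weighting each
   word by x ^ (1 + number of turning points), and the gamma polynomial, weighting only the
   alternating words, by x ^ k * (1 + x) ^ (length u - k) with k the number of leaves of the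
   HR-tree. They agree by strong induction on Y.
   If a is the least letter, both sums are empty. If a lies strictly between the least letter m and
   the greatest letter M, split every word at its first occurrence of m or M: both weights factor
   there, an order-reversing relabelling shows that the sum over the suffixes does not depend on
   which of m and M comes first, and the two choices together contribute 1 + x times the weight of
   the shorter prefix word. If a is the greatest letter, the relabelling turns it into the least
   one, and splitting off the second letter b leaves 1 + x times the sums of the same kind starting
   at b (for runs this uses the symmetry between ascending and descending starts).
   The parity of the number of negative entries depends only on the set of entries, so the identity
   applies set by set to the signed permutations with negative first entry and, after negating all
   entries, to those with positive first entry. *)

section \<open>Turning points of words\<close>

definition turn :: "'a::linorder \<Rightarrow> 'a \<Rightarrow> 'a \<Rightarrow> bool" where
  "turn a b c \<longleftrightarrow> (a < b \<and> c < b) \<or> (b < a \<and> b < c)"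

fun turns :: "'a::linorder list \<Rightarrow> nat" where
  "turns (a # b # c # w) = (if turn a b c then 1 else 0) + turns (b # c # w)"
| "turns _ = 0"

definition zigzag :: "'a::linorder list \<Rightarrow> bool" where
  "zigzag w \<longleftrightarrow> turns w + 2 = length w"

lemma turns_le_length: "2 \<le> length w \<Longrightarrow> turns w + 2 \<le> length w"
  by (induction w rule: turns.induct) auto

lemma turns_append:
  "turns (v @ b # w) = turns (v @ [b]) +
     (if v \<noteq> [] \<and> w \<noteq> [] \<and> turn (last v) b (hd w) then 1 else 0) + turns (b # w)"
proof (induction v rule: induct_list012)
  case (2 a)
  then show ?case by (cases w) auto
next
  case (3 a a' v)
  have "hd (v @ b # w) = hd (v @ [b])" by (cases v) auto
  moreover obtain c r where "v @ b # w = c # r" by (cases "v @ b # w") auto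
  moreover obtain c' r' where "v @ [b] = c' # r'" by (cases "v @ [b]") auto
  ultimately show ?case using 3(2) by auto
qed simp

lemma turns_snoc_snoc:
  "v \<noteq> [] \<Longrightarrow> turns (v @ [c, e]) = turns (v @ [c]) + (if turn (last v) c e then 1 else 0)"
  using turns_append[of v c "[e]"] by simp

lemma turns_append_extreme:
  assumes "v \<noteq> []" "S \<noteq> []" "(\<forall>y\<in>set v \<union> set S. e < y) \<or> (\<forall>y\<in>set v \<union> set S. y < e)"
  shows "turns (v @ e # S) = turns (v @ [e]) + 1 + turns (e # S)"
proof -
  have "last v \<in> set v" "hd S \<in> set S" using assms(1,2) by simp_all
  then have "turn (last v) e (hd S)" using assms(3) unfolding turn_def by blast
  then show ?thesis using turns_append[of v e S] assms(1,2) by simp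
qed

lemma turns_snoc_extremes:
  assumes "distinct v" "2 \<le> length v" "\<forall>y\<in>set v. m < y \<and> y < M"
  shows "turns (v @ [m]) = turns v + 1 \<and> turns (v @ [M]) = turns v
    \<or> turns (v @ [m]) = turns v \<and> turns (v @ [M]) = turns v + 1"
proof -
  obtain u c where v: "v = u @ [c]" using assms(2) by (cases v rule: rev_cases) auto
  then have "u \<noteq> []" using assms(2) by auto
  moreover have "last u \<noteq> c" "last u \<in> set v" "c \<in> set v"
    using assms(1) \<open>u \<noteq> []\<close> unfolding v by auto
  then have "turn (last u) c m \<longleftrightarrow> last u < c" "turn (last u) c M \<longleftrightarrow> c < last u"
    using assms(3) unfolding turn_def by auto
  ultimately show ?thesis
    using turns_snoc_snoc[of u c m] turns_snoc_snoc[of u c M] \<open>last u \<noteq> c\<close> unfolding v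
    by (cases "last u < c") auto
qed

lemma strict_antimono_on_less_iff:
  fixes g :: "'a::linorder \<Rightarrow> 'b::linorder"
  assumes "strict_antimono_on A g" "x \<in> A" "y \<in> A"
  shows "g x < g y \<longleftrightarrow> y < x"
  using assms by (cases x y rule: linorder_cases) (auto dest: monotone_onD)

lemma turns_map_antimono:
  "strict_antimono_on (set w) g \<Longrightarrow> turns (map g w) = turns w"
proof (induction w rule: turns.induct)
  case (1 a b c w)
  then have "turn (g a) (g b) (g c) = turn a b c"
    unfolding turn_def by (simp add: strict_antimono_on_less_iff) blast
  moreover have "strict_antimono_on (set (b # c # w)) g"
    using "1.prems" by (rule monotone_on_subset) auto
  ultimately show ?case using 1 by simp
qed auto

definition up_down :: "bool \<Rightarrow> 'a::linorder list \<Rightarrow> bool" where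
  "up_down up w \<longleftrightarrow>
     (\<forall>i. Suc i < length w \<longrightarrow> (if even i = up then w ! i < w ! Suc i else w ! Suc i < w ! i))"

lemma up_down_Cons_Cons:
  "up_down up (a # b # w) \<longleftrightarrow> (if up then a < b else b < a) \<and> up_down (\<not> up) (b # w)"
proof -
  have "(\<forall>i. Suc i < Suc (Suc n) \<longrightarrow> Q i) \<longleftrightarrow> Q 0 \<and> (\<forall>i. Suc i < Suc n \<longrightarrow> Q (Suc i))"
    for Q :: "nat \<Rightarrow> bool" and n
    by (metis Suc_less_eq not0_implies_Suc zero_less_Suc)
  then show ?thesis unfolding up_down_def by simp
qed

lemma up_down_iff_zigzag:
  "distinct w \<Longrightarrow> 2 \<le> length w \<Longrightarrow>
    up_down up w \<longleftrightarrow> zigzag w \<and> (if up then w ! 0 < w ! 1 else w ! 1 < w ! 0)"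
proof (induction w arbitrary: up rule: turns.induct)
  case (1 a b c w)
  have "turns (b # c # w) + 2 \<le> length (b # c # w)" by (rule turns_le_length) simp
  moreover have "a \<noteq> b" "b \<noteq> c" using "1.prems" by auto
  ultimately show ?case
    using "1.IH"[of "\<not> up"] "1.prems" unfolding up_down_Cons_Cons zigzag_def
    by (cases up; cases "a < b"; cases "b < c") (auto simp: turn_def)
next
  case ("2_3" a b)
  then show ?case by (simp add: up_down_def zigzag_def less_Suc_eq)
qed auto

lemma turns_eq_card:
  "turns w = card {i. 0 < i \<and> i + 1 < length w \<and> turn (w ! (i - 1)) (w ! i) (w ! (i + 1))}"
proof (induction w rule: turns.induct)
  case (1 a b c w)
  have "{i. 0 < i \<and> i + 1 < length (a # b # c # w) \<and>
          turn ((a # b # c # w) ! (i - 1)) ((a # b # c # w) ! i) ((a # b # c # w) ! (i + 1))}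
      = (if turn a b c then {1} else {}) \<union>
        Suc ` {i. 0 < i \<and> i + 1 < length (b # c # w) \<and>
          turn ((b # c # w) ! (i - 1)) ((b # c # w) ! i) ((b # c # w) ! (i + 1))}"
    (is "?L = _ \<union> Suc ` ?R")
  proof (rule set_eqI)
    fix i show "i \<in> ?L \<longleftrightarrow> i \<in> (if turn a b c then {1} else {}) \<union> Suc ` ?R"
      by (cases i; cases "i - 1") (auto simp: image_iff)
  qed
  moreover have "finite ?R" by (rule finite_subset[of _ "{..<length (b # c # w)}"]) auto
  moreover have "1 \<notin> Suc ` ?R" by auto
  ultimately show ?case using "1.IH" by (simp add: card_image)
qed (auto simp: less_Suc_eq)

lemma runB_eq_turns: "runB p = 1 + turns (0 # p)"
  unfolding runB_def Let_def turns_eq_card turn_def by (auto intro!: arg_cong[where f = card])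

section \<open>HR-trees of words\<close>

definition is_extreme :: "'a::linorder list \<Rightarrow> 'a \<Rightarrow> bool" where
  "is_extreme w y \<longleftrightarrow> y = Min (set w) \<or> y = Max (set w)"

lemma is_extreme_iff:
  "w \<noteq> [] \<Longrightarrow> is_extreme w y \<longleftrightarrow> y \<in> set w \<and> ((\<forall>z\<in>set w. y \<le> z) \<or> (\<forall>z\<in>set w. z \<le> y))"
  unfolding is_extreme_def by (metis List.finite_set Max_ge Max_in Min_in Min_le antisym set_empty)

lemma is_extremeI:
  assumes "e \<in> set w" "(\<forall>y\<in>set w - {e}. e < y) \<or> (\<forall>y\<in>set w - {e}. y < e)"
  shows "is_extreme w e"
  using assms(2)
proof
  assume "\<forall>y\<in>set w - {e}. e < y"
  then have "Min (set w) = e" using assms(1) by (intro Min_eqI) (auto simp: order_le_less)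
  then show ?thesis by (simp add: is_extreme_def)
next
  assume "\<forall>y\<in>set w - {e}. y < e"
  then have "Max (set w) = e" using assms(1) by (intro Max_eqI) (auto simp: order_le_less)
  then show ?thesis by (simp add: is_extreme_def)
qed

lemma ex_extreme: "w \<noteq> [] \<Longrightarrow> \<exists>y\<in>set w. is_extreme w y"
  unfolding is_extreme_def using Min_in[of "set w"] by auto

lemma split_first_extreme:
  assumes "w \<noteq> []"
  obtains P e S where "w = P @ e # S" "is_extreme w e" "\<forall>y\<in>set P. \<not> is_extreme w y"
  using split_list_first_propE[OF ex_extreme[OF assms]] by metis

lemma is_extreme_map_antimono:
  assumes "strict_antimono_on (set w) g" "y \<in> set w"
  shows "is_extreme (map g w) (g y) \<longleftrightarrow> is_extreme w y"
proof -
  have "g y \<le> g z \<longleftrightarrow> z \<le> y" if "z \<in> set w" for z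
    using strict_antimono_on_less_iff[OF assms(1) that assms(2)] by (simp add: not_less[symmetric])
  moreover have "g z \<le> g y \<longleftrightarrow> y \<le> z" if "z \<in> set w" for z
    using strict_antimono_on_less_iff[OF assms(1) assms(2) that] by (simp add: not_less[symmetric])
  moreover have "w \<noteq> []" using assms(2) by auto
  ultimately show ?thesis
    using assms(2) is_extreme_iff[of w] is_extreme_iff[of "map g w"] by auto
qed

lemma length_takeWhile_less: "\<exists>x\<in>set xs. \<not> P x \<Longrightarrow> length (takeWhile P xs) < length xs"
  by (induction xs) auto

function hr_tree_of :: "'a::linorder list \<Rightarrow> 'a btree" where
  "hr_tree_of [] = Tip"
| "hr_tree_of (x # xs) =
     Nd (hr_tree_of (takeWhile (\<lambda>y. \<not> is_extreme (x # xs) y) (x # xs)))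
        (hd (dropWhile (\<lambda>y. \<not> is_extreme (x # xs) y) (x # xs)))
        (hr_tree_of (tl (dropWhile (\<lambda>y. \<not> is_extreme (x # xs) y) (x # xs))))"
  by pat_completeness auto
termination
proof (relation "measure length")
  fix x :: 'a and xs
  have "length (takeWhile (\<lambda>y. \<not> is_extreme (x # xs) y) (x # xs)) < length (x # xs)"
    by (rule length_takeWhile_less) (use ex_extreme[of "x # xs"] in simp)
  then show "(takeWhile (\<lambda>y. \<not> is_extreme (x # xs) y) (x # xs), x # xs) \<in> measure length"
    by simp
  show "(tl (dropWhile (\<lambda>y. \<not> is_extreme (x # xs) y) (x # xs)), x # xs) \<in> measure length"
    using length_dropWhile_le[of "\<lambda>y. \<not> is_extreme (x # xs) y" xs] by auto
qed auto

lemma hr_tree_of_split: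
  assumes "is_extreme (P @ e # S) e" "\<forall>y\<in>set P. \<not> is_extreme (P @ e # S) y"
  shows "hr_tree_of (P @ e # S) = Nd (hr_tree_of P) e (hr_tree_of S)"
proof -
  obtain x xs where "P @ e # S = x # xs" by (cases P) auto
  moreover have "takeWhile (\<lambda>y. \<not> is_extreme (P @ e # S) y) (P @ e # S) = P"
    and "dropWhile (\<lambda>y. \<not> is_extreme (P @ e # S) y) (P @ e # S) = e # S"
    using assms by (simp_all add: takeWhile_append2 dropWhile_append2)
  ultimately show ?thesis by (metis hr_tree_of.simps(2) list.sel(1,3))
qed

declare hr_tree_of.simps(2)[simp del]

lemma hr_tree_of_eq_Tip_iff [simp]: "hr_tree_of w = Tip \<longleftrightarrow> w = []"
  by (cases w) (auto simp: hr_tree_of.simps)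

lemma set_inord: "set (inord t) = labels t"
  by (induction t) auto

lemma other_extreme_in_suffix:
  assumes w: "w = P @ e # S" "distinct w" "2 \<le> length w"
    and P: "\<forall>y\<in>set P. \<not> is_extreme w y"
  shows "e = Min (set w) \<Longrightarrow> Max (set w) \<in> set S" and "e = Max (set w) \<Longrightarrow> Min (set w) \<in> set S"
proof -
  have "card (set w) \<ge> 2" using w distinct_card by metis
  then have "Min (set w) \<noteq> Max (set w)"
    by (metis List.finite_set Max_ge Min_le antisym card_le_Suc0_iff_eq not_less_eq_eq numeral_2_eq_2)
  moreover have "Min (set w) \<in> set w" "Max (set w) \<in> set w"
    using w(1) by (simp_all del: set_append)
  moreover have "Min (set w) \<notin> set P" "Max (set w) \<notin> set P"
    using P unfolding is_extreme_def by auto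
  moreover have "\<And>m M. m \<noteq> M \<Longrightarrow> m \<in> set w \<Longrightarrow> M \<in> set w \<Longrightarrow> m \<notin> set P \<Longrightarrow> M \<notin> set P \<Longrightarrow>
      (e = m \<longrightarrow> M \<in> set S) \<and> (e = M \<longrightarrow> m \<in> set S)"
    using w(1) by auto
  ultimately show "e = Min (set w) \<Longrightarrow> Max (set w) \<in> set S" "e = Max (set w) \<Longrightarrow> Min (set w) \<in> set S"
    by blast+
qed

lemma hr_tree_of_correct: "distinct w \<Longrightarrow> hr_cond (hr_tree_of w) \<and> inord (hr_tree_of w) = w"
proof (induction "length w" arbitrary: w rule: less_induct)
  case less
  show ?case
  proof (cases w)
    case (Cons x xs)
    then obtain P e S where w: "w = P @ e # S" and e: "is_extreme w e"
      and P: "\<forall>y\<in>set P. \<not> is_extreme w y"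
      using split_first_extreme by blast
    have "length P < length w" "length S < length w" "distinct P" "distinct S"
      using w less.prems by auto
    then have IH: "hr_cond (hr_tree_of P) \<and> inord (hr_tree_of P) = P"
      "hr_cond (hr_tree_of S) \<and> inord (hr_tree_of S) = S"
      using less.hyps by blast+
    have tree: "hr_tree_of w = Nd (hr_tree_of P) e (hr_tree_of S)"
      using hr_tree_of_split[of P e S] e P unfolding w by blast
    have inord: "inord (hr_tree_of w) = w" using tree IH w by simp
    then have lab: "labels (Nd (hr_tree_of P) e (hr_tree_of S)) = set w" "labels (hr_tree_of S) = set S"
      using IH tree set_inord by metis+
    have root: "S \<noteq> [] \<and> (e = Min (set w) \<longrightarrow> Max (set w) \<in> set S) \<and> (e = Max (set w) \<longrightarrow> Min (set w) \<in> set S)"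
      if "P \<noteq> [] \<or> S \<noteq> []"
    proof -
      have "2 \<le> length w" using that unfolding w by (cases P; cases S) auto
      note other = other_extreme_in_suffix[OF w less.prems this P]
      have "e = Min (set w) \<or> e = Max (set w)" using e unfolding is_extreme_def .
      with other show ?thesis by (metis empty_iff list.set(1))
    qed
    have "hr_cond (Nd (hr_tree_of P) e (hr_tree_of S))"
      unfolding hr_cond.simps(2) Let_def lab hr_tree_of_eq_Tip_iff
      using IH root e unfolding is_extreme_def by blast
    with inord tree show ?thesis by simp
  qed simp
qed

lemma hr_tree_of_inord: "hr_cond t \<Longrightarrow> distinct (inord t) \<Longrightarrow> hr_tree_of (inord t) = t"
proof (induction t)
  case (Nd l a r)
  define w where "w = inord (Nd l a r)"
  have sw: "set w = labels (Nd l a r)" unfolding w_def by (simp add: set_inord)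
  have a: "a = Min (set w) \<or> a = Max (set w)" using Nd.prems(1) sw by (simp add: Let_def)
  have "\<not> is_extreme w y" if y: "y \<in> set (inord l)" for y
  proof -
    have "l \<noteq> Tip" using y by auto
    then have "(a = Min (set w) \<longrightarrow> Max (set w) \<in> labels r) \<and> (a = Max (set w) \<longrightarrow> Min (set w) \<in> labels r)"
      using Nd.prems(1) sw by (simp add: Let_def)
    moreover have "y \<noteq> a" "y \<notin> labels r" using Nd.prems(2) y by (auto simp flip: set_inord)
    ultimately show ?thesis using a unfolding is_extreme_def by auto
  qed
  then have "hr_tree_of w = Nd (hr_tree_of (inord l)) a (hr_tree_of (inord r))"
    using hr_tree_of_split[of "inord l" a "inord r"] a unfolding w_def is_extreme_def by simp
  then show ?case using Nd unfolding w_def by (simp add: Let_def)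
qed simp

lemma T_of_eq_hr_tree_of: "distinct (0 # p) \<Longrightarrow> T_of p = hr_tree_of (0 # p)"
  unfolding T_of_def
proof (rule the_equality)
  show "HR_tree (hr_tree_of (0 # p)) \<and> inord (hr_tree_of (0 # p)) = 0 # p" if "distinct (0 # p)"
    using hr_tree_of_correct[OF that] that unfolding HR_tree_def by simp
  show "t = hr_tree_of (0 # p)" if "HR_tree t \<and> inord t = 0 # p" for t
    using hr_tree_of_inord[of t] that unfolding HR_tree_def by metis
qed

definition leaves :: "'a::linorder list \<Rightarrow> nat" where
  "leaves w = leaf (hr_tree_of w)"

lemma leaves_split:
  assumes "is_extreme (P @ e # S) e" "\<forall>y\<in>set P. \<not> is_extreme (P @ e # S) y"
  shows "leaves (P @ e # S) = (if P = [] \<and> S = [] then 1 else leaves P + leaves S)"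
  unfolding leaves_def hr_tree_of_split[OF assms] by simp

lemma leaves_Cons_extreme: "is_extreme (e # S) e \<Longrightarrow> S \<noteq> [] \<Longrightarrow> leaves (e # S) = leaves S"
  using leaves_split[of "[]" e S] by (simp add: leaves_def)

lemma leaves_map_antimono: "strict_antimono_on (set w) g \<Longrightarrow> leaves (map g w) = leaves w"
proof (induction "length w" arbitrary: w rule: less_induct)
  case less
  show ?case
  proof (cases w)
    case (Cons x xs)
    then obtain P e S where w: "w = P @ e # S" and e: "is_extreme w e"
      and P: "\<forall>y\<in>set P. \<not> is_extreme w y"
      using split_first_extreme by blast
    have "set P \<subseteq> set w" "set S \<subseteq> set w" "e \<in> set w" "length P < length w" "length S < length w"
      unfolding w by auto
    then have IH: "leaves (map g P) = leaves P" "leaves (map g S) = leaves S"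
      using less.hyps less.prems by (metis monotone_on_subset)+
    have "is_extreme (map g w) (g e)" "\<forall>y\<in>set (map g P). \<not> is_extreme (map g w) y"
      using is_extreme_map_antimono[OF less.prems] e P \<open>set P \<subseteq> set w\<close> \<open>e \<in> set w\<close> by auto
    then have "leaves (map g w) = (if P = [] \<and> S = [] then 1 else leaves (map g P) + leaves (map g S))"
      using leaves_split[of "map g P" "g e" "map g S"] unfolding w by simp
    also have "\<dots> = leaves w"
      using IH leaves_split[of P e S] e P unfolding w by simp
    finally show ?thesis .
  qed (simp add: leaves_def)
qed

lemma leaves_bounds: "distinct w \<Longrightarrow> w \<noteq> [] \<Longrightarrow> 1 \<le> leaves w \<and> 2 * leaves w \<le> length w + 1"
proof -
  have "t \<noteq> Tip \<Longrightarrow> 1 \<le> leaf t" and "2 * leaf t \<le> length (inord t) + 1" for t :: "'a btree"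
    by (induction t) auto
  then show "distinct w \<Longrightarrow> w \<noteq> [] \<Longrightarrow> ?thesis"
    using hr_tree_of_correct[of w] unfolding leaves_def by (metis hr_tree_of_eq_Tip_iff)
qed

lemma leaves_singleton [simp]: "leaves [a] = 1"
  using leaves_split[of "[]" a "[]"] by (simp add: is_extreme_def)

lemma leaves_le_length: "distinct w \<Longrightarrow> w \<noteq> [] \<Longrightarrow> leaves w \<le> length w"
  using leaves_bounds[of w] by (cases w) auto

section \<open>Sums over arrangements\<close>

lemma sum_permutations_of_set_Cons:
  fixes f :: "'a list \<Rightarrow> 'b::comm_monoid_add"
  assumes "finite A" "A \<noteq> {}"
  shows "(\<Sum>u\<in>permutations_of_set A. f u) = (\<Sum>b\<in>A. \<Sum>u\<in>permutations_of_set (A - {b}). f (b # u))"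
proof -
  have "(\<Sum>u\<in>permutations_of_set A. f u)
      = (\<Sum>b\<in>A. \<Sum>u\<in>(\<lambda>xs. b # xs) ` permutations_of_set (A - {b}). f u)"
    unfolding permutations_of_set_nonempty[OF assms(2)]
    by (rule sum.UNION_disjoint) (auto simp: assms(1))
  also have "\<dots> = (\<Sum>b\<in>A. \<Sum>u\<in>permutations_of_set (A - {b}). f (b # u))"
    by (rule sum.cong[OF refl], subst sum.reindex) (auto simp: inj_on_def)
  finally show ?thesis .
qed

lemma sum_permutations_of_set_image:
  fixes f :: "'a list \<Rightarrow> 'b::comm_monoid_add"
  assumes "inj_on g A"
  shows "(\<Sum>u\<in>permutations_of_set (g ` A). f u) = (\<Sum>u\<in>permutations_of_set A. f (map g u))"
proof -
  have "inj_on (map g) (permutations_of_set A)"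
    by (rule inj_on_subset[OF inj_on_map_lists[OF assms]]) (auto dest: permutations_of_setD)
  then show ?thesis
    unfolding permutations_of_set_image_inj[OF assms] by (simp add: sum.reindex)
qed

lemma ex_bij_betw_strict_antimono_on:
  fixes A :: "'a::linorder set" and B :: "'b::linorder set"
  assumes "finite A" "finite B" "card A = card B"
  obtains g where "bij_betw g A B" "strict_antimono_on A g"
  using assms
proof (induction "card A" arbitrary: A B thesis)
  case 0
  then show ?case by (auto simp: bij_betw_def monotone_on_def)
next
  case (Suc n)
  then have "A \<noteq> {}" "B \<noteq> {}" by auto
  define a where "a = Max A"
  define b where "b = Min B"
  have a: "a \<in> A" "\<forall>y\<in>A. y \<le> a" using Suc.prems \<open>A \<noteq> {}\<close> by (simp_all add: a_def)
  have b: "b \<in> B" "\<forall>y\<in>B. b \<le> y" using Suc.prems \<open>B \<noteq> {}\<close> by (simp_all add: b_def)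
  have "n = card (A - {a})" "card (A - {a}) = card (B - {b})"
    using Suc.hyps(2) Suc.prems(2-4) a(1) b(1) by auto
  then obtain g where g: "bij_betw g (A - {a}) (B - {b})" "strict_antimono_on (A - {a}) g"
    using Suc.hyps(1)[of "A - {a}" "B - {b}"] Suc.prems(2,3) by blast
  define h where "h = g(a := b)"
  have "bij_betw h (A - {a}) (B - {b})"
    using g(1) unfolding h_def by (rule bij_betw_cong[THEN iffD1, rotated]) auto
  then have "bij_betw h ((A - {a}) \<union> {a}) ((B - {b}) \<union> {h a})"
    by (subst notIn_Un_bij_betw3[symmetric]) (auto simp: h_def)
  then have "bij_betw h A B"
    using a(1) b(1) by (simp add: h_def insert_absorb)
  moreover have "strict_antimono_on A h"
  proof (rule monotone_onI)
    fix x y assume xy: "x \<in> A" "y \<in> A" "x < y"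
    then have "x \<noteq> a" using a(2) by (meson leD)
    show "h y < h x"
    proof (cases "y = a")
      case True
      have "g x \<in> B - {b}" using g(1) xy(1) \<open>x \<noteq> a\<close> by (auto simp: bij_betw_def)
      then show ?thesis using True \<open>x \<noteq> a\<close> b(2) by (auto simp: h_def order_le_less)
    next
      case False
      then show ?thesis using g(2) xy \<open>x \<noteq> a\<close> by (auto simp: h_def dest: monotone_onD)
    qed
  qed
  ultimately show ?case by (rule Suc.prems(1))
qed

lemma bij_betw_split_first:
  assumes E: "E \<subseteq> U" "E \<noteq> {}"
  shows "bij_betw (\<lambda>(e, X, P, S). P @ e # S)
    (SIGMA e:E. SIGMA X:Pow (U - E). permutations_of_set X \<times> permutations_of_set (U - X - {e}))
    (permutations_of_set U)" (is "bij_betw ?join ?I _")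
proof -
  define pre where "pre u = takeWhile (\<lambda>y. y \<notin> E) u" for u :: "'a list"
  define post where "post u = dropWhile (\<lambda>y. y \<notin> E) u" for u :: "'a list"
  define cut where "cut u = (hd (post u), set (pre u), pre u, tl (post u))" for u
  have join: "cut (?join t) = t" "?join t \<in> permutations_of_set U" if "t \<in> ?I" for t
  proof -
    obtain e X P S where t: "t = (e, X, P, S)" by (cases t rule: prod_cases4)
    have P: "e \<in> E" "X \<subseteq> U - E" "set P = X" "distinct P" "set S = U - X - {e}" "distinct S"
      using that unfolding t by (auto dest: permutations_of_setD)
    then have "\<forall>y\<in>set P. y \<notin> E" by auto
    then have "pre (P @ e # S) = P" "post (P @ e # S) = e # S"
      using P(1) by (simp_all add: pre_def post_def takeWhile_append2 dropWhile_append2)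
    then show "cut (?join t) = t" using P(3) by (simp add: cut_def t)
    show "?join t \<in> permutations_of_set U"
      using P E unfolding t by (auto intro!: permutations_of_setI)
  qed
  have cut: "?join (cut u) = u" "cut u \<in> ?I" if "u \<in> permutations_of_set U" for u
  proof -
    have u: "set u = U" "distinct u" using that by (auto dest: permutations_of_setD)
    then have ne: "post u \<noteq> []" using E by (auto simp: post_def dropWhile_eq_Nil_conv)
    then have dec: "pre u @ hd (post u) # tl (post u) = u" by (simp add: pre_def post_def)
    then show "?join (cut u) = u" by (simp add: cut_def)
    have "hd (post u) \<in> E" using hd_dropWhile[OF ne[unfolded post_def]] by (simp add: post_def)
    moreover have "set (pre u) \<subseteq> U - E" using u(1) by (auto simp: pre_def dest: set_takeWhileD)
    moreover have "set (pre u) \<union> insert (hd (post u)) (set (tl (post u))) = U"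
      using arg_cong[OF dec, of set] u(1) by simp
    moreover have "distinct (pre u @ hd (post u) # tl (post u))" by (metis dec u(2))
    ultimately show "cut u \<in> ?I"
      unfolding cut_def by (auto intro!: permutations_of_setI)
  qed
  show ?thesis
  proof (rule bij_betw_byWitness[where f' = cut])
    show "\<forall>t\<in>?I. cut (?join t) = t" using join(1) by blast
    show "?join ` ?I \<subseteq> permutations_of_set U" by (rule image_subsetI) (rule join(2))
    show "\<forall>u\<in>permutations_of_set U. ?join (cut u) = u" using cut(1) by blast
    show "cut ` permutations_of_set U \<subseteq> ?I" by (rule image_subsetI) (rule cut(2))
  qed
qed

lemma sum_permutations_of_set_split_first:
  fixes f :: "'a list \<Rightarrow> 'b::comm_monoid_add"
  assumes U: "finite U" and E: "E \<subseteq> U" "E \<noteq> {}"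
  shows "(\<Sum>u\<in>permutations_of_set U. f u) =
    (\<Sum>e\<in>E. \<Sum>X\<in>Pow (U - E). \<Sum>P\<in>permutations_of_set X.
       \<Sum>S\<in>permutations_of_set (U - X - {e}). f (P @ e # S))"
proof -
  have "finite E" using U E finite_subset by blast
  have "(\<Sum>u\<in>permutations_of_set U. f u)
      = (\<Sum>(e, X, P, S)\<in>(SIGMA e:E. SIGMA X:Pow (U - E).
          permutations_of_set X \<times> permutations_of_set (U - X - {e})). f (P @ e # S))"
    using sum.reindex_bij_betw[OF bij_betw_split_first[OF E], of f] by (simp add: split_def)
  also have "\<dots> = (\<Sum>e\<in>E. \<Sum>X\<in>Pow (U - E). \<Sum>P\<in>permutations_of_set X.
       \<Sum>S\<in>permutations_of_set (U - X - {e}). f (P @ e # S))"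
    using U \<open>finite E\<close> by (simp add: sum.cartesian_product sum.Sigma split_def)
  finally show ?thesis .
qed

definition word_sum :: "('a list \<Rightarrow> 'b::comm_monoid_add) \<Rightarrow> 'a \<Rightarrow> 'a set \<Rightarrow> 'b" where
  "word_sum F a Y = (\<Sum>S\<in>permutations_of_set Y. F (a # S))"

definition word_sum_down :: "('a::linorder list \<Rightarrow> 'b::comm_monoid_add) \<Rightarrow> 'a \<Rightarrow> 'a set \<Rightarrow> 'b" where
  "word_sum_down F a Y = (\<Sum>S\<in>permutations_of_set Y. if S \<noteq> [] \<and> hd S < a then F (a # S) else 0)"

definition word_sum_up :: "('a::linorder list \<Rightarrow> 'b::comm_monoid_add) \<Rightarrow> 'a \<Rightarrow> 'a set \<Rightarrow> 'b" where
  "word_sum_up F a Y = (\<Sum>S\<in>permutations_of_set Y. if S \<noteq> [] \<and> a < hd S then F (a # S) else 0)"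

lemma word_sum_down_eq_0: "\<forall>y\<in>Y. a < y \<Longrightarrow> word_sum_down F a Y = 0"
  unfolding word_sum_down_def
  by (rule sum.neutral) (auto dest!: permutations_of_setD(1) hd_in_set)

lemma word_sum_down_eq_word_sum:
  "Y \<noteq> {} \<Longrightarrow> \<forall>y\<in>Y. y < a \<Longrightarrow> word_sum_down F a Y = word_sum F a Y"
  unfolding word_sum_down_def word_sum_def
  by (rule sum.cong) (auto dest!: permutations_of_setD(1) hd_in_set)

lemma word_sum_map_antimono:
  fixes g :: "'a::linorder \<Rightarrow> 'a"
  assumes g: "strict_antimono_on (insert e Y) g"
    and F: "\<And>w. strict_antimono_on (set w) g \<Longrightarrow> F (map g w) = F w"
  shows "word_sum F (g e) (g ` Y) = word_sum F e Y"
proof -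
  have "inj_on g (insert e Y)"
    by (rule strict_antimono_iff_antimono[THEN iffD1, OF g, THEN conjunct2])
  then have "inj_on g Y" by (rule inj_on_subset) auto
  moreover have "F (g e # map g S) = F (e # S)" if "S \<in> permutations_of_set Y" for S
  proof -
    have "set (e # S) = insert e Y" using permutations_of_setD(1)[OF that] by simp
    then show ?thesis using F[of "e # S"] g by simp
  qed
  ultimately show ?thesis
    unfolding word_sum_def by (simp add: sum_permutations_of_set_image)
qed

lemma word_sum_up_eq_word_sum_down_uminus:
  fixes F :: "int list \<Rightarrow> 'b::comm_monoid_add"
  assumes "\<And>w. F (map uminus w) = F w"
  shows "word_sum_up F a Y = word_sum_down F (- a) (uminus ` Y)"
proof -
  have "(if S \<noteq> [] \<and> a < hd S then F (a # S) else 0)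
      = (if map uminus S \<noteq> [] \<and> hd (map uminus S) < - a then F (- a # map uminus S) else 0)" for S
    using assms[of "a # S"] by (cases S) auto
  then show ?thesis
    unfolding word_sum_up_def word_sum_down_def
    by (simp add: sum_permutations_of_set_image)
qed

section \<open>Weights that factor at the first extreme letter\<close>

text \<open>Both \<open>run_weight\<close> and \<open>gamma_weight\<close> below are instances, so the case of the induction
  in which the first letter is neither minimal nor maximal is proved once for both.\<close>
locale extreme_factorization =
  fixes x :: "'b::comm_semiring_1"
    and F :: "'a::linorder list \<Rightarrow> 'b"
    and G :: "'a list \<Rightarrow> 'a \<Rightarrow> 'b"
  assumes F_map_antimono: "strict_antimono_on (set w) g \<Longrightarrow> F (map g w) = F w"
    and F_split: "\<lbrakk>distinct (v @ e # S); v \<noteq> []; S \<noteq> [];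
      (\<forall>y\<in>set v \<union> set S. e < y) \<or> (\<forall>y\<in>set v \<union> set S. y < e);
      \<forall>y\<in>set v. \<not> is_extreme (v @ e # S) y\<rbrakk> \<Longrightarrow> F (v @ e # S) = G v e * F (e # S)"
    and G_extremes: "\<lbrakk>distinct v; 2 \<le> length v; \<forall>y\<in>set v. m < y \<and> y < M\<rbrakk>
      \<Longrightarrow> G v m + G v M = (1 + x) * F v"
    and G_singleton: "m < a \<Longrightarrow> G [a] m = x"
begin

lemma word_sum_Max_eq_Min:
  assumes "finite W" "W \<noteq> {}"
  shows "word_sum F (Max W) (W - {Max W}) = word_sum F (Min W) (W - {Min W})"
proof -
  obtain \<rho> where \<rho>: "bij_betw \<rho> W W" "strict_antimono_on W \<rho>"
    using ex_bij_betw_strict_antimono_on[OF assms(1) assms(1) refl] by blast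
  have Min: "Min W \<in> W" "\<forall>y\<in>W. Min W \<le> y" using assms by simp_all
  have "z \<le> \<rho> (Min W)" if "z \<in> W" for z
  proof -
    obtain y where "y \<in> W" "z = \<rho> y" using \<rho>(1) \<open>z \<in> W\<close> by (auto simp: bij_betw_def)
    then show ?thesis
      using Min strict_antimono_on_less_iff[OF \<rho>(2)] by (metis not_le order_le_less)
  qed
  moreover have "\<rho> (Min W) \<in> W" using \<rho>(1) Min(1) by (auto simp: bij_betw_def)
  ultimately have \<rho>_Min: "\<rho> (Min W) = Max W"
    using assms(1) by (intro Max_eqI[symmetric]) auto
  have "\<rho> ` (W - {Min W}) = \<rho> ` W - \<rho> ` {Min W}"
    using \<rho>(1) Min(1) by (intro inj_on_image_set_diff) (auto simp: bij_betw_def)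
  then have "\<rho> ` (W - {Min W}) = W - {Max W}"
    using \<rho>(1) \<rho>_Min by (simp add: bij_betw_def)
  then show ?thesis
    using word_sum_map_antimono[of "Min W" "W - {Min W}" \<rho> F] \<rho>(2) Min(1) \<rho>_Min F_map_antimono
    by (simp add: insert_absorb)
qed

lemma word_sum_down_Max_eq:
  assumes "finite Y" "a \<notin> Y" "Y \<noteq> {}" "\<forall>y\<in>Y. y < a"
  shows "word_sum_down F a Y = word_sum F (Min (insert a Y)) (insert a Y - {Min (insert a Y)})"
proof -
  have "Max (insert a Y) = a" using assms(1,4) by (intro Max_eqI) auto
  then show ?thesis
    using word_sum_Max_eq_Min[of "insert a Y"] assms by (simp add: word_sum_down_eq_word_sum)
qed

lemma sum_word_sum_up_eq_down:
  assumes "finite Y"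
  shows "(\<Sum>b\<in>Y. word_sum_up F b (Y - {b})) = (\<Sum>b\<in>Y. word_sum_down F b (Y - {b}))"
proof (cases "Y = {}")
  case False
  define up where "up = (\<lambda>S. case S of a # b # _ \<Rightarrow> if a < b then F S else 0 | _ \<Rightarrow> 0)"
  define down where "down = (\<lambda>S. case S of a # b # _ \<Rightarrow> if b < a then F S else 0 | _ \<Rightarrow> 0)"
  have "(\<Sum>b\<in>Y. word_sum_up F b (Y - {b})) = (\<Sum>S\<in>permutations_of_set Y. up S)"
    unfolding sum_permutations_of_set_Cons[OF assms False] word_sum_up_def up_def
    by (intro sum.cong refl) (auto split: list.split)
  moreover have "(\<Sum>b\<in>Y. word_sum_down F b (Y - {b})) = (\<Sum>S\<in>permutations_of_set Y. down S)"
    unfolding sum_permutations_of_set_Cons[OF assms False] word_sum_down_def down_def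
    by (intro sum.cong refl) (auto split: list.split)
  moreover obtain \<rho> where \<rho>: "bij_betw \<rho> Y Y" "strict_antimono_on Y \<rho>"
    using ex_bij_betw_strict_antimono_on[OF assms assms refl] by blast
  moreover have "down (map \<rho> S) = up S" if "S \<in> permutations_of_set Y" for S
  proof -
    have "set S = Y" using that by (auto dest: permutations_of_setD)
    then have "strict_antimono_on (set S) \<rho>" using \<rho>(2) by simp
    moreover from this have "F (map \<rho> S) = F S" by (rule F_map_antimono)
    ultimately show ?thesis
      unfolding up_def down_def
      by (cases S rule: turns.cases) (auto simp: strict_antimono_on_less_iff)
  qed
  ultimately show ?thesis
    using sum_permutations_of_set_image[of \<rho> Y down] \<rho>(1) by (simp add: bij_betw_def)
qed simp

lemma sum_prefix_extremes:
  assumes "finite X" "a \<notin> X" "m < a" "a < M" "\<forall>y\<in>X. m < y \<and> y < M"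
  shows "(\<Sum>e\<in>{m, M}. \<Sum>P\<in>permutations_of_set X. if hd (P @ [e]) < a then G (a # P) e else 0)
    = (if X = {} then x else (1 + x) * word_sum_down F a X)"
proof (cases "X = {}")
  case True
  have "m \<noteq> M" "\<not> M < a" using assms by auto
  then show ?thesis using assms(3) by (simp add: True G_singleton)
next
  case False
  have "P \<noteq> []" if "P \<in> permutations_of_set X" for P
    using False permutations_of_setD(1)[OF that] by auto
  then have "(\<Sum>e\<in>{m, M}. \<Sum>P\<in>permutations_of_set X. if hd (P @ [e]) < a then G (a # P) e else 0)
      = (\<Sum>e\<in>{m, M}. \<Sum>P\<in>permutations_of_set X. if hd P < a then G (a # P) e else 0)"
    by (intro sum.cong refl) simp
  also have "\<dots> = (\<Sum>P\<in>permutations_of_set X. if hd P < a then G (a # P) m + G (a # P) M else 0)"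
    using assms by (simp add: sum.distrib[symmetric]) (intro sum.cong refl, simp)
  also have "\<dots> = (\<Sum>P\<in>permutations_of_set X. (1 + x) * (if P \<noteq> [] \<and> hd P < a then F (a # P) else 0))"
  proof (intro sum.cong refl)
    fix P assume "P \<in> permutations_of_set X"
    then have P: "set P = X" "distinct P" by (auto dest: permutations_of_setD)
    then have "P \<noteq> []" using False by auto
    moreover have "G (a # P) m + G (a # P) M = (1 + x) * F (a # P)"
      by (rule G_extremes) (use P assms \<open>P \<noteq> []\<close> in \<open>auto simp: Suc_le_eq\<close>)
    ultimately show "(if hd P < a then G (a # P) m + G (a # P) M else 0)
      = (1 + x) * (if P \<noteq> [] \<and> hd P < a then F (a # P) else 0)"
      by simp
  qed
  finally show ?thesis
    using False by (simp add: word_sum_down_def sum_distrib_left)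
qed

lemma word_sum_down_split_first_extreme:
  assumes Y: "finite Y" "a \<notin> Y" and "m < a" "a < M"
    and m: "m = Min (insert a Y)" and M: "M = Max (insert a Y)"
  shows "word_sum_down F a Y = (\<Sum>X\<in>Pow (Y - {m, M}). \<Sum>e\<in>{m, M}.
    (\<Sum>P\<in>permutations_of_set X. if hd (P @ [e]) < a then G (a # P) e else 0)
      * word_sum F e (Y - X - {e}))"
proof -
  have "m \<in> insert a Y" "M \<in> insert a Y" "\<forall>y\<in>insert a Y. m \<le> y \<and> y \<le> M"
    using Y(1) unfolding m M by (auto intro!: Min_in Max_in simp del: insert_iff)
  then have mM: "m \<in> Y" "M \<in> Y" "\<forall>y\<in>Y. m \<le> y \<and> y \<le> M"
    using \<open>m < a\<close> \<open>a < M\<close> by auto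
  have factor: "(if P @ e # S \<noteq> [] \<and> hd (P @ e # S) < a then F (a # P @ e # S) else 0)
      = (if hd (P @ [e]) < a then G (a # P) e else 0) * F (e # S)"
    if e: "e \<in> {m, M}" and X: "X \<subseteq> Y - {m, M}" and "P \<in> permutations_of_set X"
      and "S \<in> permutations_of_set (Y - X - {e})" for e X P S
  proof -
    have P: "set P = X" "distinct P" and S: "set S = Y - X - {e}" "distinct S"
      using that by (auto dest: permutations_of_setD)
    have w: "set (a # P @ e # S) = insert a Y" "distinct (a # P @ e # S)"
      using P S X e mM Y(2) by auto
    have "S \<noteq> []" using S X e mM \<open>m < a\<close> \<open>a < M\<close> by auto
    moreover have "(\<forall>y\<in>set (a # P) \<union> set S. e < y) \<or> (\<forall>y\<in>set (a # P) \<union> set S. y < e)"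
    proof -
      have "set (a # P) \<union> set S \<subseteq> insert a Y - {e}" using w by auto
      then show ?thesis using e mM \<open>m < a\<close> \<open>a < M\<close> by fastforce
    qed
    moreover have "\<forall>y\<in>set (a # P). \<not> is_extreme (a # P @ e # S) y"
      using w(1) P X \<open>m < a\<close> \<open>a < M\<close> unfolding is_extreme_def m M by auto
    ultimately have "F (a # P @ e # S) = G (a # P) e * F (e # S)"
      using F_split[of "a # P" e S] w(2) by simp
    then show ?thesis by (cases P) auto
  qed
  have "word_sum_down F a Y = (\<Sum>e\<in>{m, M}. \<Sum>X\<in>Pow (Y - {m, M}). \<Sum>P\<in>permutations_of_set X.
      \<Sum>S\<in>permutations_of_set (Y - X - {e}).
        if P @ e # S \<noteq> [] \<and> hd (P @ e # S) < a then F (a # P @ e # S) else 0)"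
    unfolding word_sum_down_def using Y(1) mM by (intro sum_permutations_of_set_split_first) auto
  also have "\<dots> = (\<Sum>e\<in>{m, M}. \<Sum>X\<in>Pow (Y - {m, M}). \<Sum>P\<in>permutations_of_set X.
      \<Sum>S\<in>permutations_of_set (Y - X - {e}).
        (if hd (P @ [e]) < a then G (a # P) e else 0) * F (e # S))"
    by (intro sum.cong refl factor) auto
  also have "\<dots> = (\<Sum>e\<in>{m, M}. \<Sum>X\<in>Pow (Y - {m, M}).
      (\<Sum>P\<in>permutations_of_set X. if hd (P @ [e]) < a then G (a # P) e else 0)
        * word_sum F e (Y - X - {e}))"
    unfolding word_sum_def sum_product ..
  finally show ?thesis by (rule trans) (rule sum.swap)
qed

lemma word_sum_down_middle:
  assumes Y: "finite Y" "a \<notin> Y" and "m < a" "a < M"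
    and m: "m = Min (insert a Y)" and M: "M = Max (insert a Y)"
  shows "word_sum_down F a Y = (\<Sum>X\<in>Pow (Y - {m, M}).
    (if X = {} then x else (1 + x) * word_sum_down F a X) * word_sum F m (Y - X - {m}))"
proof -
  have "m \<in> insert a Y" "M \<in> insert a Y" "\<forall>y\<in>insert a Y. m \<le> y \<and> y \<le> M"
    using Y(1) unfolding m M by (auto intro!: Min_in Max_in simp del: insert_iff)
  then have mM: "m \<in> Y" "M \<in> Y" "\<forall>y\<in>Y. m \<le> y \<and> y \<le> M"
    using \<open>m < a\<close> \<open>a < M\<close> by auto
  \<comment> \<open>reversing the order of \<open>Y - X\<close> exchanges its minimum \<open>m\<close> and its maximum \<open>M\<close>\<close>
  have swap: "word_sum F M (Y - X - {M}) = word_sum F m (Y - X - {m})"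
    if "X \<in> Pow (Y - {m, M})" for X
  proof -
    have "Min (Y - X) = m" "Max (Y - X) = M"
      using that mM Y(1) by (auto intro: Min_eqI Max_eqI)
    moreover have "Y - X \<noteq> {}" using that mM by auto
    ultimately show ?thesis
      using word_sum_Max_eq_Min[of "Y - X"] Y(1) by simp
  qed
  have "word_sum_down F a Y = (\<Sum>X\<in>Pow (Y - {m, M}). (\<Sum>e\<in>{m, M}.
      \<Sum>P\<in>permutations_of_set X. if hd (P @ [e]) < a then G (a # P) e else 0)
        * word_sum F m (Y - X - {m}))"
    unfolding word_sum_down_split_first_extreme[OF assms] sum_distrib_right
    by (intro sum.cong refl) (auto simp: swap)
  also have "\<dots> = (\<Sum>X\<in>Pow (Y - {m, M}).
      (if X = {} then x else (1 + x) * word_sum_down F a X) * word_sum F m (Y - X - {m}))"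
  proof (intro sum.cong refl)
    fix X assume "X \<in> Pow (Y - {m, M})"
    then have "finite X" "a \<notin> X" "\<forall>y\<in>X. m < y \<and> y < M"
      using Y mM by (auto intro: finite_subset simp: order.strict_iff_order)
    then show "(\<Sum>e\<in>{m, M}. \<Sum>P\<in>permutations_of_set X. if hd (P @ [e]) < a then G (a # P) e else 0)
        * word_sum F m (Y - X - {m})
      = (if X = {} then x else (1 + x) * word_sum_down F a X) * word_sum F m (Y - X - {m})"
      using sum_prefix_extremes \<open>m < a\<close> \<open>a < M\<close> by simp
  qed
  finally show ?thesis .
qed

end

section \<open>Runs versus leaves\<close>

definition run_weight :: "'b::comm_semiring_1 \<Rightarrow> 'a::linorder list \<Rightarrow> 'b" where
  "run_weight x w = x ^ (1 + turns w)"

text \<open>For \<open>w = 0 # p\<close> with \<open>p\<close> a snake of length \<open>n\<close>, this is the term \<open>x ^ k * (1 + x) ^ (n - k)\<close>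
  of the theorem, where \<open>k\<close> is the number of leaves of \<open>T_of p\<close>.\<close>
definition gamma_weight :: "'b::comm_semiring_1 \<Rightarrow> 'a::linorder list \<Rightarrow> 'b" where
  "gamma_weight x w = (if zigzag w then x ^ leaves w * (1 + x) ^ (length w - 1 - leaves w) else 0)"

definition gamma_prefix_weight :: "'b::comm_semiring_1 \<Rightarrow> 'a::linorder list \<Rightarrow> 'a \<Rightarrow> 'b" where
  "gamma_prefix_weight x v e =
     (if zigzag (v @ [e]) then x ^ leaves v * (1 + x) ^ (length v - leaves v) else 0)"

lemma extreme_factorization_run_weight:
  fixes x :: "'b::comm_semiring_1"
  shows "extreme_factorization x (run_weight x :: 'a::linorder list \<Rightarrow> 'b) (\<lambda>v e. run_weight x (v @ [e]))"
proof
  show "run_weight x (map g w) = run_weight x w" if "strict_antimono_on (set w) g" for g w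
    using turns_map_antimono[OF that] by (simp add: run_weight_def)
  show "run_weight x (v @ e # S) = run_weight x (v @ [e]) * run_weight x (e # S)"
    if "v \<noteq> []" "S \<noteq> []" "(\<forall>y\<in>set v \<union> set S. e < y) \<or> (\<forall>y\<in>set v \<union> set S. y < e)" for v e S
    using turns_append_extreme[OF that] by (simp add: run_weight_def power_add mult_ac)
  show "run_weight x (v @ [m]) + run_weight x (v @ [M]) = (1 + x) * run_weight x v"
    if "distinct v" "2 \<le> length v" "\<forall>y\<in>set v. m < y \<and> y < M" for v m M
    using turns_snoc_extremes[OF that] by (auto simp: run_weight_def algebra_simps)
  show "run_weight x ([a] @ [m]) = x" for a m :: 'a
    by (simp add: run_weight_def)
qed

lemma gamma_weight_split:
  assumes w: "distinct (v @ e # S)" "v \<noteq> []" "S \<noteq> []"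
    and e: "(\<forall>y\<in>set v \<union> set S. e < y) \<or> (\<forall>y\<in>set v \<union> set S. y < e)"
    and v: "\<forall>y\<in>set v. \<not> is_extreme (v @ e # S) y"
  shows "gamma_weight x (v @ e # S) = gamma_prefix_weight x v e * gamma_weight x (e # S)"
proof -
  have "turns (v @ [e]) + 2 \<le> length (v @ [e])" "turns (e # S) + 2 \<le> length (e # S)"
    using w(2,3) by (intro turns_le_length; cases v; cases S; simp)+
  then have zigzag: "zigzag (v @ e # S) \<longleftrightarrow> zigzag (v @ [e]) \<and> zigzag (e # S)"
    unfolding zigzag_def turns_append_extreme[OF w(2,3) e] by auto
  have "is_extreme (v @ e # S) e" "is_extreme (e # S) e"
    using e w(1) by (auto intro!: is_extremeI)
  then have leaves: "leaves (v @ e # S) = leaves v + leaves S" "leaves (e # S) = leaves S"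
    using leaves_split[of v e S] v w(2,3) leaves_Cons_extreme by auto
  have "leaves v \<le> length v" "leaves S \<le> length S"
    using w by (auto intro!: leaves_le_length)
  then have "length (v @ e # S) - 1 - leaves (v @ e # S)
      = (length v - leaves v) + (length (e # S) - 1 - leaves (e # S))"
    unfolding leaves by simp
  then show ?thesis
    unfolding gamma_weight_def gamma_prefix_weight_def zigzag
    by (simp add: leaves power_add mult_ac)
qed

lemma gamma_prefix_weight_extremes:
  assumes v: "distinct v" "2 \<le> length v" "\<forall>y\<in>set v. m < y \<and> y < M"
  shows "gamma_prefix_weight x v m + gamma_prefix_weight x v M = (1 + x) * gamma_weight x v"
proof -
  have "turns v + 2 \<le> length v" using v(2) by (rule turns_le_length)
  moreover have "v \<noteq> []" using v(2) by auto
  then have "leaves v + 1 \<le> length v"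
    using leaves_bounds[OF v(1)] v(2) by linarith
  then have "length v - leaves v = Suc (length v - 1 - leaves v)" by simp
  ultimately show ?thesis
    using turns_snoc_extremes[OF v]
    by (auto simp: gamma_prefix_weight_def gamma_weight_def zigzag_def mult_ac)
qed

lemma extreme_factorization_gamma_weight:
  fixes x :: "'b::comm_semiring_1"
  shows "extreme_factorization x (gamma_weight x :: 'a::linorder list \<Rightarrow> 'b) (gamma_prefix_weight x)"
proof
  show "gamma_weight x (map g w) = gamma_weight x w" if "strict_antimono_on (set w) g" for g w
    using turns_map_antimono[OF that] leaves_map_antimono[OF that]
    by (simp add: gamma_weight_def zigzag_def)
  show "gamma_prefix_weight x [a] m = x" if "m < a" for a m :: 'a
    by (simp add: gamma_prefix_weight_def zigzag_def)
qed (simp_all add: gamma_weight_split gamma_prefix_weight_extremes)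

lemma run_weight_Cons_Cons_Min:
  assumes "distinct (b # u)" "u \<noteq> []" "e < b"
  shows "run_weight x (e # b # u) = (if hd u < b then x * run_weight x (b # u) else run_weight x (b # u))"
proof -
  obtain c r where u: "u = c # r" using assms(2) by (cases u) auto
  then have "c \<noteq> b" using assms(1) by auto
  with assms(3) show ?thesis unfolding u by (auto simp: run_weight_def turn_def)
qed

lemma gamma_weight_Cons_Cons_Min:
  assumes "distinct (b # u)" "u \<noteq> []" "\<forall>y\<in>set (b # u). e < y"
  shows "gamma_weight x (e # b # u) = (if hd u < b then (1 + x) * gamma_weight x (b # u) else 0)"
proof -
  obtain c r where u: "u = c # r" using assms(2) by (cases u) auto
  have "c \<noteq> b" using assms(1) u by auto
  have "turns (b # u) + 2 \<le> length (b # u)" unfolding u by (rule turns_le_length) simp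
  then have zigzag: "zigzag (e # b # u) \<longleftrightarrow> hd u < b \<and> zigzag (b # u)"
    using assms(3) \<open>c \<noteq> b\<close> unfolding u zigzag_def by (auto simp: turn_def)
  have "is_extreme (e # b # u) e" using assms(3) by (intro is_extremeI) auto
  then have "leaves (e # b # u) = leaves (b # u)" by (rule leaves_Cons_extreme) simp
  moreover have "leaves (b # u) \<le> length u"
    using leaves_bounds[OF assms(1)] assms(2) by (cases u) auto
  then have "length (e # b # u) - 1 - leaves (b # u) = Suc (length (b # u) - 1 - leaves (b # u))"
    by simp
  ultimately show ?thesis
    unfolding gamma_weight_def zigzag by (simp add: mult_ac)
qed

lemma card_ge_2_Diff_nonempty: "2 \<le> card Y \<Longrightarrow> Y - {b} \<noteq> {}"
  using card_mono[of "{b}" Y] by auto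

lemma word_sum_run_weight_Min:
  fixes x :: "'b::comm_semiring_1"
  assumes "finite Y" "2 \<le> card Y" "\<forall>y\<in>Y. e < y"
  shows "word_sum (run_weight x) e Y = (1 + x) * (\<Sum>b\<in>Y. word_sum_down (run_weight x) b (Y - {b}))"
proof -
  have "Y \<noteq> {}" using assms(2) by auto
  have "word_sum (run_weight x) e Y = (\<Sum>b\<in>Y. \<Sum>u\<in>permutations_of_set (Y - {b}). run_weight x (e # b # u))"
    unfolding word_sum_def by (rule sum_permutations_of_set_Cons[OF assms(1) \<open>Y \<noteq> {}\<close>])
  also have "\<dots> = (\<Sum>b\<in>Y. x * word_sum_down (run_weight x) b (Y - {b})
      + word_sum_up (run_weight x) b (Y - {b}))"
    unfolding word_sum_down_def word_sum_up_def sum_distrib_left sum.distrib[symmetric]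
  proof (intro sum.cong refl)
    fix b u assume "b \<in> Y" "u \<in> permutations_of_set (Y - {b})"
    then have u: "set u = Y - {b}" "distinct u" by (auto dest: permutations_of_setD)
    moreover have "u \<noteq> []" using u(1) card_ge_2_Diff_nonempty[OF assms(2)] by auto
    ultimately have "u \<noteq> []" "hd u \<noteq> b" using hd_in_set[of u] by auto
    with u show "run_weight x (e # b # u) = x * (if u \<noteq> [] \<and> hd u < b then run_weight x (b # u) else 0)
        + (if u \<noteq> [] \<and> b < hd u then run_weight x (b # u) else 0)"
      using run_weight_Cons_Cons_Min[of b u e x] assms(3) \<open>b \<in> Y\<close> by auto
  qed
  also have "\<dots> = (1 + x) * (\<Sum>b\<in>Y. word_sum_down (run_weight x) b (Y - {b}))"
    using extreme_factorization.sum_word_sum_up_eq_down[OF extreme_factorization_run_weight[of x] assms(1)]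
    by (simp add: sum.distrib sum_distrib_left algebra_simps)
  finally show ?thesis .
qed

lemma word_sum_gamma_weight_Min:
  fixes x :: "'b::comm_semiring_1"
  assumes "finite Y" "2 \<le> card Y" "\<forall>y\<in>Y. e < y"
  shows "word_sum (gamma_weight x) e Y = (1 + x) * (\<Sum>b\<in>Y. word_sum_down (gamma_weight x) b (Y - {b}))"
proof -
  have "Y \<noteq> {}" using assms(2) by auto
  have "word_sum (gamma_weight x) e Y = (\<Sum>b\<in>Y. \<Sum>u\<in>permutations_of_set (Y - {b}). gamma_weight x (e # b # u))"
    unfolding word_sum_def by (rule sum_permutations_of_set_Cons[OF assms(1) \<open>Y \<noteq> {}\<close>])
  also have "\<dots> = (1 + x) * (\<Sum>b\<in>Y. word_sum_down (gamma_weight x) b (Y - {b}))"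
    unfolding word_sum_down_def sum_distrib_left
  proof (intro sum.cong refl)
    fix b u assume "b \<in> Y" "u \<in> permutations_of_set (Y - {b})"
    then have u: "set u = Y - {b}" "distinct u" by (auto dest: permutations_of_setD)
    then have "u \<noteq> []" using card_ge_2_Diff_nonempty[OF assms(2)] by auto
    with u show "gamma_weight x (e # b # u)
        = (1 + x) * (if u \<noteq> [] \<and> hd u < b then gamma_weight x (b # u) else 0)"
      using gamma_weight_Cons_Cons_Min[of b u e x] assms(3) \<open>b \<in> Y\<close> by auto
  qed
  finally show ?thesis .
qed

lemma word_sum_run_weight_eq_gamma_weight_Min:
  fixes x :: "'b::comm_semiring_1"
  assumes Z: "finite Z" "Z \<noteq> {}" "\<forall>z\<in>Z. e < z"
    and IH: "\<And>b. b \<in> Z \<Longrightarrow>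
      word_sum_down (run_weight x) b (Z - {b}) = word_sum_down (gamma_weight x) b (Z - {b})"
  shows "word_sum (run_weight x) e Z = word_sum (gamma_weight x) e Z"
proof (cases "card Z = 1")
  case True
  then obtain b where "Z = {b}" by (auto simp: card_Suc_eq)
  then show ?thesis
    using Z(3) by (simp add: word_sum_def run_weight_def gamma_weight_def zigzag_def
        leaves_Cons_extreme is_extremeI)
next
  case False
  then have "2 \<le> card Z" using Z(1,2) by (cases "card Z") auto
  then show ?thesis
    using word_sum_run_weight_Min[OF Z(1) _ Z(3), where x = x]
      word_sum_gamma_weight_Min[OF Z(1) _ Z(3), where x = x] IH by simp
qed

theorem word_sum_down_run_weight_eq_gamma_weight:
  fixes x :: "'b::comm_semiring_1" and Y :: "'a::linorder set"
  assumes "finite Y" "a \<notin> Y"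
  shows "word_sum_down (run_weight x) a Y = word_sum_down (gamma_weight x) a Y"
  using assms
proof (induction "card Y" arbitrary: a Y rule: less_induct)
  case less
  note run = extreme_factorization_run_weight[of x] and gamma = extreme_factorization_gamma_weight[of x]
  have start: "word_sum (run_weight x) e Z = word_sum (gamma_weight x) e Z"
    if Z: "finite Z" "Z \<noteq> {}" "card Z \<le> card Y" "\<forall>z\<in>Z. e < z" for e :: 'a and Z
    using Z(1,2,4)
  proof (rule word_sum_run_weight_eq_gamma_weight_Min)
    show "word_sum_down (run_weight x) b (Z - {b}) = word_sum_down (gamma_weight x) b (Z - {b})"
      if "b \<in> Z" for b
      using less.hyps[of "Z - {b}" b] that Z(1,3) card_Diff1_less[OF Z(1) that] by auto
  qed
  define m where "m = Min (insert a Y)"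
  define M where "M = Max (insert a Y)"
  have bounds: "m \<le> y" "y \<le> M" if "y \<in> insert a Y" for y
    using less.prems(1) that unfolding m_def M_def by (auto intro: Min_le Max_ge simp del: insert_iff)
  have "m \<in> insert a Y" "M \<in> insert a Y"
    using less.prems(1) unfolding m_def M_def by (auto intro!: Min_in Max_in simp del: insert_iff)
  consider (min) "a = m" | (max) "a = M" "a \<noteq> m" | (mid) "m < a" "a < M"
    using bounds[of a] by fastforce
  then show ?case
  proof cases
    case min
    then have "\<forall>y\<in>Y. a < y" using less.prems(2) bounds(1) by (metis insertCI order_le_less)
    then show ?thesis by (simp add: word_sum_down_eq_0)
  next
    case max
    have "Y \<noteq> {}" using max(2) unfolding m_def by auto
    moreover have "\<forall>y\<in>Y. y < a" using bounds(2) max(1) less.prems(2) by (auto simp: order_le_less)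
    moreover have "word_sum (run_weight x) m (insert a Y - {m}) = word_sum (gamma_weight x) m (insert a Y - {m})"
    proof (rule start)
      show "card (insert a Y - {m}) \<le> card Y"
        using less.prems \<open>m \<in> insert a Y\<close> by (simp add: card_Diff_singleton)
      show "\<forall>z\<in>insert a Y - {m}. m < z" using bounds(1) by (auto simp: order_le_less)
    qed (use less.prems(1) max in auto)
    ultimately show ?thesis
      using extreme_factorization.word_sum_down_Max_eq[OF run less.prems]
        extreme_factorization.word_sum_down_Max_eq[OF gamma less.prems]
      unfolding m_def by simp
  next
    case mid
    have "M \<in> Y" using \<open>M \<in> insert a Y\<close> mid by auto
    have "word_sum_down (run_weight x) a X = word_sum_down (gamma_weight x) a X"
      "word_sum (run_weight x) m (Y - X - {m}) = word_sum (gamma_weight x) m (Y - X - {m})"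
      if "X \<in> Pow (Y - {m, M})" for X
    proof -
      have "card X < card Y" using that \<open>M \<in> Y\<close> less.prems(1) by (intro psubset_card_mono) auto
      moreover have "finite X" "a \<notin> X" using that less.prems by (auto intro: finite_subset)
      ultimately show "word_sum_down (run_weight x) a X = word_sum_down (gamma_weight x) a X"
        by (rule less.hyps)
      show "word_sum (run_weight x) m (Y - X - {m}) = word_sum (gamma_weight x) m (Y - X - {m})"
      proof (rule start)
        show "Y - X - {m} \<noteq> {}" using that \<open>M \<in> Y\<close> mid by auto
        show "\<forall>z\<in>Y - X - {m}. m < z" using bounds(1) by (auto simp: order_le_less)
      qed (use less.prems(1) in \<open>auto intro: card_mono\<close>)
    qed
    then show ?thesis
      unfolding extreme_factorization.word_sum_down_middle[OF run less.prems mid m_def M_def]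
        extreme_factorization.word_sum_down_middle[OF gamma less.prems mid m_def M_def]
      by (intro sum.cong refl) simp
  qed
qed

section \<open>Signed permutations\<close>

lemma signed_perms_memD: "p \<in> signed_perms n \<Longrightarrow> length p = n \<and> distinct p \<and> 0 \<notin> set p"
  unfolding signed_perms_def by (force simp: distinct_map)

lemma finite_signed_perms: "finite (signed_perms n)"
proof (rule finite_subset)
  show "signed_perms n \<subseteq> {p. set p \<subseteq> {- int n..int n} \<and> length p = n}"
    unfolding signed_perms_def by (force simp: abs_le_iff)
qed (rule finite_lists_length_eq, simp)

lemma signed_perms_with_set:
  assumes "p \<in> signed_perms n"
  shows "{q \<in> signed_perms n. set q = set p} = permutations_of_set (set p)"
proof (intro equalityI subsetI)
  fix q assume "q \<in> permutations_of_set (set p)"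
  then have "set q = set p" "distinct q" by (auto dest: permutations_of_setD)
  moreover have "length q = length p" using calculation signed_perms_memD[OF assms] by (metis distinct_card)
  ultimately show "q \<in> {q \<in> signed_perms n. set q = set p}"
    using assms unfolding signed_perms_def by (auto simp: distinct_map inj_on_def)
qed (auto dest: signed_perms_memD)

lemma sum_signed_perms_by_set:
  "(\<Sum>p\<in>signed_perms n. h p) = (\<Sum>C\<in>set ` signed_perms n. \<Sum>p\<in>permutations_of_set C. h p)"
proof -
  have "(\<Sum>p\<in>signed_perms n. h p) = (\<Sum>C\<in>set ` signed_perms n. \<Sum>p\<in>{q \<in> signed_perms n. set q = C}. h p)"
    by (rule sum.group[symmetric]) (auto simp: finite_signed_perms)
  also have "\<dots> = (\<Sum>C\<in>set ` signed_perms n. \<Sum>p\<in>permutations_of_set C. h p)"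
  proof (rule sum.cong[OF refl])
    fix C assume "C \<in> set ` signed_perms n"
    then obtain p where "p \<in> signed_perms n" "C = set p" by blast
    then show "sum h {q \<in> signed_perms n. set q = C} = sum h (permutations_of_set C)"
      using signed_perms_with_set by simp
  qed
  finally show ?thesis .
qed

lemma sum_signed_perms_cong_set_invariant:
  assumes P: "\<And>p q. set p = set q \<Longrightarrow> P p \<longleftrightarrow> P q"
    and fg: "\<And>C. C \<in> set ` signed_perms n \<Longrightarrow>
      (\<Sum>p\<in>permutations_of_set C. f p) = (\<Sum>p\<in>permutations_of_set C. g p)"
  shows "(\<Sum>p\<in>signed_perms n. if P p then f p else 0) = (\<Sum>p\<in>signed_perms n. if P p then g p else 0)"
  unfolding sum_signed_perms_by_set
proof (rule sum.cong[OF refl])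
  fix C assume C: "C \<in> set ` signed_perms n"
  then obtain q where "set q = C" by blast
  then have "P p \<longleftrightarrow> P q" if "p \<in> permutations_of_set C" for p
    using P permutations_of_setD(1)[OF that] by simp
  then show "(\<Sum>p\<in>permutations_of_set C. if P p then f p else 0)
      = (\<Sum>p\<in>permutations_of_set C. if P p then g p else 0)"
    using fg[OF C] by (cases "P q") simp_all
qed

lemma word_sum_up_run_weight_eq_gamma_weight:
  fixes x :: "'b::comm_semiring_1" and Y :: "int set"
  assumes "finite Y" "a \<notin> Y"
  shows "word_sum_up (run_weight x) a Y = word_sum_up (gamma_weight x) a Y"
proof -
  have "strict_antimono_on (set w) uminus" for w :: "int list" by (auto simp: monotone_on_def)
  then have "run_weight x (map uminus w) = run_weight x w" "gamma_weight x (map uminus w) = gamma_weight x w"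
    for w :: "int list"
    by (simp_all add: extreme_factorization.F_map_antimono[OF extreme_factorization_run_weight[of x]]
        extreme_factorization.F_map_antimono[OF extreme_factorization_gamma_weight[of x]])
  moreover have "- a \<notin> uminus ` Y" using assms(2) by auto
  ultimately show ?thesis
    using word_sum_down_run_weight_eq_gamma_weight[of "uminus ` Y" "- a" x] assms(1)
    by (simp add: word_sum_up_eq_word_sum_down_uminus)
qed

lemma map_uminus_signed_perms_iff: "map uminus p \<in> signed_perms n \<longleftrightarrow> p \<in> signed_perms n"
  unfolding signed_perms_def by (simp add: comp_def image_image)

lemma snakes_eq:
  assumes "1 \<le> n"
  shows "snakes n = {p \<in> signed_perms n. zigzag (0 # p) \<and> 0 < hd p}"
  unfolding snakes_def
proof (intro Collect_cong conj_cong refl)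
  fix p assume p: "p \<in> signed_perms n"
  then have "length p = n" "distinct (0 # p)" using signed_perms_memD by auto
  then have "p \<noteq> []" "2 \<le> length (0 # p)" using assms by auto
  have "(\<forall>i<n. let w = 0 # p in if even i then w ! i < w ! (i + 1) else w ! (i + 1) < w ! i)
      \<longleftrightarrow> up_down True (0 # p)"
    unfolding up_down_def Let_def using \<open>length p = n\<close> by auto
  also have "\<dots> \<longleftrightarrow> zigzag (0 # p) \<and> 0 < hd p"
    using up_down_iff_zigzag[OF \<open>distinct (0 # p)\<close> \<open>2 \<le> length (0 # p)\<close>] \<open>p \<noteq> []\<close>
    by (simp add: hd_conv_nth)
  finally show "(\<forall>i<n. let w = 0 # p in if even i then w ! i < w ! (i + 1) else w ! (i + 1) < w ! i)
      \<longleftrightarrow> zigzag (0 # p) \<and> 0 < hd p" .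
qed

lemma snakes_bar_eq:
  assumes "1 \<le> n"
  shows "snakes_bar n = {p \<in> signed_perms n. zigzag (0 # p) \<and> hd p < 0}"
proof -
  have "zigzag (0 # map uminus p) \<longleftrightarrow> zigzag (0 # p)" for p :: "int list"
    using turns_map_antimono[of "0 # p" uminus] by (simp add: zigzag_def monotone_on_def)
  moreover have "p \<in> signed_perms n \<Longrightarrow> p \<noteq> []" for p
    using signed_perms_memD[of p n] assms by auto
  ultimately have "snakes n = map uminus ` {p \<in> signed_perms n. zigzag (0 # p) \<and> hd p < 0}"
    unfolding snakes_eq[OF assms] 
    by (auto simp: image_iff map_uminus_signed_perms_iff hd_map intro!: exI[of _ "map uminus _"])
  then show ?thesis
    unfolding snakes_bar_def by (simp add: image_image comp_def)
qed

lemma sum_signed_perms_gamma_weight_by_leaves: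
  fixes x :: "'b::comm_semiring_1"
  assumes "1 \<le> n" and S: "S = {p \<in> signed_perms n. zigzag (0 # p) \<and> R p}"
  shows "(\<Sum>p\<in>signed_perms n. if P p \<and> R p then gamma_weight x (0 # p) else 0)
    = (\<Sum>k=1..(n + 2) div 2. of_nat (card {p \<in> S. leaf (T_of p) = k \<and> P p}) * x ^ k * (1 + x) ^ (n - k))"
proof -
  let ?A = "{p \<in> S. P p}"
  have leaf: "leaf (T_of p) \<in> {1..(n + 2) div 2}"
    "gamma_weight x (0 # p) = x ^ leaf (T_of p) * (1 + x) ^ (n - leaf (T_of p))" if "p \<in> ?A" for p
  proof -
    have "distinct (0 # p)" "length p = n" "zigzag (0 # p)" using that S signed_perms_memD by auto
    then have "leaf (T_of p) = leaves (0 # p)"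
      by (simp add: T_of_eq_hr_tree_of leaves_def)
    moreover have "1 \<le> leaves (0 # p)" "2 * leaves (0 # p) \<le> n + 2"
      using leaves_bounds[OF \<open>distinct (0 # p)\<close>] \<open>length p = n\<close> by auto
    ultimately show "leaf (T_of p) \<in> {1..(n + 2) div 2}"
      "gamma_weight x (0 # p) = x ^ leaf (T_of p) * (1 + x) ^ (n - leaf (T_of p))"
      using \<open>zigzag (0 # p)\<close> \<open>length p = n\<close> by (auto simp: gamma_weight_def)
  qed
  have "(\<Sum>p\<in>signed_perms n. if P p \<and> R p then gamma_weight x (0 # p) else 0)
      = (\<Sum>p\<in>{p \<in> signed_perms n. P p \<and> R p}. gamma_weight x (0 # p))"
    by (simp add: sum.inter_filter[OF finite_signed_perms])
  also have "\<dots> = (\<Sum>p\<in>?A. gamma_weight x (0 # p))"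
  proof (rule sum.mono_neutral_right)
    show "?A \<subseteq> {p \<in> signed_perms n. P p \<and> R p}" using S by blast
    show "\<forall>p\<in>{p \<in> signed_perms n. P p \<and> R p} - ?A. gamma_weight x (0 # p) = 0"
      using S by (auto simp: gamma_weight_def)
  qed (simp add: finite_signed_perms)
  also have "\<dots> = (\<Sum>p\<in>?A. x ^ leaf (T_of p) * (1 + x) ^ (n - leaf (T_of p)))"
    using leaf(2) by simp
  also have "\<dots> = (\<Sum>k=1..(n + 2) div 2. \<Sum>p\<in>{p \<in> ?A. leaf (T_of p) = k}.
          x ^ leaf (T_of p) * (1 + x) ^ (n - leaf (T_of p)))"
    using leaf(1) finite_subset[OF _ finite_signed_perms, of ?A n] S by (intro sum.group[symmetric]) auto
  also have "\<dots> = (\<Sum>k=1..(n + 2) div 2. of_nat (card {p \<in> ?A. leaf (T_of p) = k}) * x ^ k * (1 + x) ^ (n - k))"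
    by (simp add: mult.assoc)
  also have "\<dots> = (\<Sum>k=1..(n + 2) div 2. of_nat (card {p \<in> S. leaf (T_of p) = k \<and> P p}) * x ^ k * (1 + x) ^ (n - k))"
    by (simp add: conj_ac)
  finally show ?thesis .
qed

lemma signed_perms_neq_Nil: "1 \<le> n \<Longrightarrow> p \<in> signed_perms n \<Longrightarrow> p \<noteq> []"
  using signed_perms_memD[of p n] by auto

lemma RD_neg_eq_sum_dbar:
  fixes x :: real
  assumes "1 \<le> n"
  shows "RD_neg n x = (\<Sum>k=1..(n + 2) div 2. real (dbar n k) * x ^ k * (1 + x) ^ (n - k))"
proof -
  define ev where "ev p \<longleftrightarrow> even (card (Negs p))" for p :: "int list"
  have "RD_neg n x
      = (\<Sum>p\<in>signed_perms n. if ev p then if p \<noteq> [] \<and> hd p < 0 then run_weight x (0 # p) else 0 else 0)"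
    using signed_perms_neq_Nil[OF assms]
    unfolding RD_neg_def typeD_perms_def run_weight_def runB_eq_turns ev_def
    by (simp add: sum.inter_filter[OF finite_signed_perms, symmetric] if_if_eq_conj conj_ac)
  also have "\<dots>
      = (\<Sum>p\<in>signed_perms n. if ev p then if p \<noteq> [] \<and> hd p < 0 then gamma_weight x (0 # p) else 0 else 0)"
    using word_sum_down_run_weight_eq_gamma_weight[where x = x] signed_perms_memD
    by (intro sum_signed_perms_cong_set_invariant) (auto simp: ev_def Negs_def word_sum_down_def[symmetric])
  also have "\<dots> = (\<Sum>k=1..(n + 2) div 2. real (dbar n k) * x ^ k * (1 + x) ^ (n - k))"
  proof -
    have "snakes_bar n = {p \<in> signed_perms n. zigzag (0 # p) \<and> p \<noteq> [] \<and> hd p < 0}"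
      using snakes_bar_eq[OF assms] signed_perms_neq_Nil[OF assms] by auto
    then show ?thesis
      unfolding dbar_def ev_def if_if_eq_conj by (rule sum_signed_perms_gamma_weight_by_leaves[OF assms])
  qed
  finally show ?thesis .
qed

lemma RD_pos_eq_sum_dhat:
  fixes x :: real
  assumes "1 \<le> n"
  shows "(\<Sum>p\<in>{p \<in> typeD_perms n. 0 < hd p}. x ^ runB p)
    = (\<Sum>k=1..(n + 2) div 2. real (dhat n k) * x ^ k * (1 + x) ^ (n - k))"
proof -
  define ev where "ev p \<longleftrightarrow> even (card (Negs p))" for p :: "int list"
  have "(\<Sum>p\<in>{p \<in> typeD_perms n. 0 < hd p}. x ^ runB p)
      = (\<Sum>p\<in>signed_perms n. if ev p then if p \<noteq> [] \<and> 0 < hd p then run_weight x (0 # p) else 0 else 0)"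
    using signed_perms_neq_Nil[OF assms]
    unfolding typeD_perms_def run_weight_def runB_eq_turns ev_def
    by (simp add: sum.inter_filter[OF finite_signed_perms, symmetric] if_if_eq_conj conj_ac)
  also have "\<dots>
      = (\<Sum>p\<in>signed_perms n. if ev p then if p \<noteq> [] \<and> 0 < hd p then gamma_weight x (0 # p) else 0 else 0)"
    using word_sum_up_run_weight_eq_gamma_weight[where x = x] signed_perms_memD
    by (intro sum_signed_perms_cong_set_invariant) (auto simp: ev_def Negs_def word_sum_up_def[symmetric])
  also have "\<dots> = (\<Sum>k=1..(n + 2) div 2. real (dhat n k) * x ^ k * (1 + x) ^ (n - k))"
  proof -
    have "snakes n = {p \<in> signed_perms n. zigzag (0 # p) \<and> p \<noteq> [] \<and> 0 < hd p}"
      using snakes_eq[OF assms] signed_perms_neq_Nil[OF assms] by auto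
    then show ?thesis
      unfolding dhat_def ev_def if_if_eq_conj by (rule sum_signed_perms_gamma_weight_by_leaves[OF assms])
  qed
  finally show ?thesis .
qed

lemma RD_eq_RD_neg_add:
  assumes "1 \<le> n"
  shows "RD n x = RD_neg n x + (\<Sum>p\<in>{p \<in> typeD_perms n. 0 < hd p}. x ^ runB p)"
proof -
  have "hd p \<noteq> 0" if "p \<in> typeD_perms n" for p
  proof -
    have "p \<in> signed_perms n" using that unfolding typeD_perms_def by simp
    then show ?thesis using signed_perms_memD signed_perms_neq_Nil[OF assms] hd_in_set by metis
  qed
  then have "typeD_perms n = {p \<in> typeD_perms n. hd p < 0} \<union> {p \<in> typeD_perms n. 0 < hd p}"
    by (auto simp: neq_iff)
  moreover have "finite (typeD_perms n)"
    unfolding typeD_perms_def using finite_signed_perms by simp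
  ultimately show ?thesis
    unfolding RD_def RD_neg_def by (subst sum.union_disjoint[symmetric]) auto
qed

theorem mainTheorem18:
  fixes n :: nat and x :: real
  assumes "n \<ge> 1"
  shows "RD_neg n x = (\<Sum>k=1..(n + 2) div 2. real (dbar n k) * x ^ k * (1 + x) ^ (n - k))
     \<and> RD n x = (\<Sum>k=1..(n + 2) div 2. real (dhat n k + dbar n k) * x ^ k * (1 + x) ^ (n - k))"
  using RD_neg_eq_sum_dbar[OF assms] RD_pos_eq_sum_dhat[OF assms] RD_eq_RD_neg_add[OF assms]
  by (simp add: sum.distrib[symmetric] algebra_simps)

end
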